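(* Let $T=(T_1,\dots,T_m)$ be algebraically independent over $F$, let $g\in F[T]$ be irreducible, and put $F[g]=\mathrm{Frac}(F[T]/(g))$. Let $\phi$ be a quasilinear $p$-form over $F$ and $f\in F[T]$ with $f\in D(\phi_{F(T)})$. If $\phi_{F[g]}$ is anisotropic, then $\mathrm{mult}_g(f)\equiv0\pmod p$.
   Context: Let $p$ be a prime and $F$ a field of characteristic $p$. A quasilinear $p$-form over a field $K$ of char. $p$ is a map $\phi\colon V\to K$ on a nonzero finite-dimensional $K$-vector space, homogeneous of degree $p$ and additive; $D(\phi)$ is its value set; $\phi_K$ the scalar extension; anisotropic means $\phi(v)\ne0$ for all $v\ne0$. $\mathrm{mult}_g(f)$ is the largest $s\ge0$ with $f=g^sh$ for some $h\in F[T]$ (with $\mathrm{mult}_g(0)=+\infty$). *)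

theory Defs
  imports Main "HOL-Library.Poly_Mapping" "HOL-Library.Extended_Nat"
    "HOL-Computational_Algebra.Fraction_Field" "HOL-Computational_Algebra.Factorial_Ring"
begin

text \<open>Polynomial ring F[T] in the finitely many algebraically independent variables
  T_v, v ranging over a finite (linearly ordered) type 'v; m = CARD('v).\<close>
type_synonym ('v, 'a) mpoly = "('v \<Rightarrow>\<^sub>0 nat) \<Rightarrow>\<^sub>0 'a"

definition mconst :: "'a::zero \<Rightarrow> ('v, 'a) mpoly" where
  "mconst c = Poly_Mapping.single 0 c"

definition quasilinear_form :: "nat \<Rightarrow> (('i::finite \<Rightarrow> 'a::field) \<Rightarrow> 'a) \<Rightarrow> bool" where
  "quasilinear_form p \<phi> \<longleftrightarrow>
     (\<forall>x y. \<phi> (\<lambda>i. x i + y i) = \<phi> x + \<phi> y) \<and> (\<forall>c x. \<phi> (\<lambda>i. c * x i) = c ^ p * \<phi> x)"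

text \<open>Scalar extension phi_K along a field embedding / algebra map e : F -> K,
  computed on the standard basis of F^n (extended K-linearly to K^n).\<close>
definition form_ext :: "nat \<Rightarrow> ('a \<Rightarrow> 'k::field) \<Rightarrow> (('i::finite \<Rightarrow> 'a::field) \<Rightarrow> 'a)
     \<Rightarrow> ('i \<Rightarrow> 'k) \<Rightarrow> 'k" where
  "form_ext p e \<phi> x = (\<Sum>i\<in>UNIV. e (\<phi> (\<lambda>j. if j = i then 1 else 0)) * x i ^ p)"

definition value_set :: "(('i \<Rightarrow> 'k) \<Rightarrow> 'k) \<Rightarrow> 'k set" where
  "value_set \<psi> = range \<psi>"

definition anisotropic :: "(('i \<Rightarrow> 'k::zero) \<Rightarrow> 'k) \<Rightarrow> bool" where
  "anisotropic \<psi> \<longleftrightarrow> (\<forall>x. (\<exists>i. x i \<noteq> 0) \<longrightarrow> \<psi> x \<noteq> 0)"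

text \<open>pi : F[T] -> K exhibits K as Frac(F[T]/(g)): pi is a ring homomorphism with
  kernel (g) and every element of K is a quotient of elements of the image.\<close>
definition is_frac_quotient :: "('r::comm_ring_1 \<Rightarrow> 'k::field) \<Rightarrow> 'r \<Rightarrow> bool" where
  "is_frac_quotient \<pi> g \<longleftrightarrow>
     \<pi> 1 = 1 \<and> (\<forall>a b. \<pi> (a + b) = \<pi> a + \<pi> b) \<and> (\<forall>a b. \<pi> (a * b) = \<pi> a * \<pi> b) \<and>
     (\<forall>h. \<pi> h = 0 \<longleftrightarrow> g dvd h) \<and>
     (\<forall>z. \<exists>a b. \<pi> b \<noteq> 0 \<and> z = \<pi> a / \<pi> b)"

definition mult :: "'r::comm_semiring_1 \<Rightarrow> 'r \<Rightarrow> enat" where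
  "mult g f = (if f = 0 then \<infinity> else enat (GREATEST s. g ^ s dvd f))"

end

theory Submission
  imports Defs
begin

text \<open>Clearing denominators turns the hypothesis into an identity
  \<open>f * D ^ p = (\<Sum>i. c\<^sub>i * y\<^sub>i ^ p)\<close> in \<open>F[T]\<close>, where the \<open>c\<^sub>i\<close> are the diagonal
  coefficients of \<open>\<phi>\<close>. Writing \<open>y\<^sub>i = g ^ s * z\<^sub>i\<close> with \<open>s\<close> maximal, the sum becomes
  \<open>g ^ (p * s)\<close> times \<open>\<Sum>i. c\<^sub>i * z\<^sub>i ^ p\<close>, whose image in \<open>F[g]\<close> is a value of
  \<open>\<phi>\<^bsub>F[g]\<^esub>\<close> at a nonzero vector, hence nonzero by anisotropy. Since \<open>g\<close> generates the kernel of
  a map to a field it is prime, so \<open>mult g\<close> is additive and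
  \<open>mult g f + p * mult g D = p * s\<close>.\<close>

section \<open>Leading monomials\<close>

text \<open>The order on exponent vectors is the lexicographic one from \<open>Poly_Mapping\<close>; it is
  compatible with addition, so leading monomials are additive on products.\<close>

definition lead_monom :: "('v::linorder, 'a::zero) mpoly \<Rightarrow> ('v \<Rightarrow>\<^sub>0 nat)" where
  "lead_monom a = Max (Poly_Mapping.keys a)"

lemma lead_monom_in_keys: "a \<noteq> 0 \<Longrightarrow> lead_monom a \<in> Poly_Mapping.keys a"
  unfolding lead_monom_def by (intro Max_in) auto

lemma le_lead_monom: "k \<in> Poly_Mapping.keys a \<Longrightarrow> k \<le> lead_monom a"
  unfolding lead_monom_def by simp

lemma lookup_mult_lead_monom:
  fixes a b :: "('v::linorder, 'a::comm_semiring_0) mpoly"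
  shows "Poly_Mapping.lookup (a * b) (lead_monom a + lead_monom b) =
    Poly_Mapping.lookup a (lead_monom a) * Poly_Mapping.lookup b (lead_monom b)"
proof -
  let ?A = "lead_monom a" and ?B = "lead_monom b"
  have "Poly_Mapping.lookup a l * (\<Sum>q. Poly_Mapping.lookup b q when ?A + ?B = l + q) =
      (Poly_Mapping.lookup a ?A * Poly_Mapping.lookup b ?B when l = ?A)" for l
  proof (cases "l = ?A")
    case False
    show ?thesis
    proof (cases "l \<in> Poly_Mapping.keys a")
      case True
      with False have "l < ?A" using le_lead_monom[of l a] by simp
      have "(Poly_Mapping.lookup b q when ?A + ?B = l + q) = 0" for q
      proof (cases "q \<in> Poly_Mapping.keys b")
        case True
        then have "l + q < ?A + ?B" using \<open>l < ?A\<close> le_lead_monom add_less_le_mono by blast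
        then show ?thesis by auto
      qed (simp add: in_keys_iff)
      with False show ?thesis by simp
    qed (simp add: False in_keys_iff)
  qed simp
  then show ?thesis by (simp add: lookup_mult)
qed

lemma lead_monom_mult:
  fixes a b :: "('v::linorder, 'a::idom) mpoly"
  assumes "a \<noteq> 0" "b \<noteq> 0"
  shows "lead_monom (a * b) = lead_monom a + lead_monom b"
  unfolding lead_monom_def[of "a * b"]
proof (rule Max_eqI)
  show "lead_monom a + lead_monom b \<in> Poly_Mapping.keys (a * b)"
    using lead_monom_in_keys[OF assms(1)] lead_monom_in_keys[OF assms(2)]
    by (simp add: in_keys_iff lookup_mult_lead_monom)
next
  fix k assume "k \<in> Poly_Mapping.keys (a * b)"
  then obtain l q where "k = l + q" "l \<in> Poly_Mapping.keys a" "q \<in> Poly_Mapping.keys b"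
    using keys_mult by blast
  then show "k \<le> lead_monom a + lead_monom b" by (simp add: add_mono le_lead_monom)
qed simp

text \<open>The lexicographic order is not archimedean, so multiplicities are bounded via the total
  degree of the leading monomial instead.\<close>

definition monom_degree :: "('v::finite \<Rightarrow>\<^sub>0 nat) \<Rightarrow> nat" where
  "monom_degree x = (\<Sum>v\<in>UNIV. Poly_Mapping.lookup x v)"

lemma monom_degree_add: "monom_degree (x + y) = monom_degree x + monom_degree y"
  unfolding monom_degree_def by (simp add: lookup_add sum.distrib)

lemma monom_degree_eq_0_iff: "monom_degree x = 0 \<longleftrightarrow> x = 0"
  unfolding monom_degree_def by (auto simp: poly_mapping_eq_iff fun_eq_iff)

lemma zero_le_monom: "(0::'v::linorder \<Rightarrow>\<^sub>0 nat) \<le> x"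
proof (cases "x = 0")
  case False
  define k where "k = Min (Poly_Mapping.keys x)"
  have k: "k \<in> Poly_Mapping.keys x"
    using False unfolding k_def by (intro Min_in) auto
  have "Poly_Mapping.lookup x k' = 0" if "k' < k" for k'
    using that unfolding k_def by (metis Min_le finite_keys in_keys_iff leD)
  with k have "less_fun (Poly_Mapping.lookup 0) (Poly_Mapping.lookup x)"
    unfolding less_fun_def by (auto simp: in_keys_iff)
  then show ?thesis by (simp add: less_eq_poly_mapping.rep_eq)
qed simp

lemma lead_monom_eq_0_imp_const:
  fixes a :: "('v::linorder, 'a::zero) mpoly"
  assumes "lead_monom a = 0"
  shows "a = mconst (Poly_Mapping.lookup a 0)"
proof (rule poly_mapping_eqI)
  fix k
  have "k \<in> Poly_Mapping.keys a \<Longrightarrow> k = 0"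
    using le_lead_monom[of k a] zero_le_monom[of k] assms by simp
  then show "Poly_Mapping.lookup a k = Poly_Mapping.lookup (mconst (Poly_Mapping.lookup a 0)) k"
    by (cases "k = 0") (auto simp: mconst_def lookup_single in_keys_iff)
qed

lemma lead_monom_neq_0_if_not_unit:
  fixes g :: "('v::linorder, 'a::field) mpoly"
  assumes "g \<noteq> 0" "\<not> g dvd 1"
  shows "lead_monom g \<noteq> 0"
proof
  assume "lead_monom g = 0"
  then have g: "g = mconst (Poly_Mapping.lookup g 0)" by (rule lead_monom_eq_0_imp_const)
  with assms(1) have "Poly_Mapping.lookup g 0 \<noteq> 0" by (metis mconst_def single_zero)
  then have "g * mconst (inverse (Poly_Mapping.lookup g 0)) = 1"
    by (subst g) (simp add: mconst_def mult_single)
  with assms(2) show False by (metis dvd_triv_left)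
qed

lemma monom_degree_lead_monom_power:
  fixes g :: "('v::{finite,linorder}, 'a::idom) mpoly"
  assumes "g \<noteq> 0"
  shows "monom_degree (lead_monom (g ^ n)) = n * monom_degree (lead_monom g)"
proof (induction n)
  case 0
  have "lead_monom (1::('v, 'a) mpoly) = 0" by (simp add: lead_monom_def)
  then show ?case by (simp add: monom_degree_def)
next
  case (Suc n)
  then show ?case using assms by (simp add: lead_monom_mult monom_degree_add)
qed

lemma finite_power_dvd_mpoly:
  fixes g a :: "('v::{finite,linorder}, 'a::field) mpoly"
  assumes "g \<noteq> 0" "\<not> g dvd 1" "a \<noteq> 0"
  shows "finite {s. g ^ s dvd a}"
proof (rule finite_subset)
  show "{s. g ^ s dvd a} \<subseteq> {..monom_degree (lead_monom a)}"
  proof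
    fix s assume "s \<in> {s. g ^ s dvd a}"
    then obtain h where h: "a = g ^ s * h" by blast
    with assms have "h \<noteq> 0" by auto
    with h assms(1) have "monom_degree (lead_monom a) = s * monom_degree (lead_monom g) + monom_degree (lead_monom h)"
      by (simp add: lead_monom_mult monom_degree_add monom_degree_lead_monom_power)
    moreover have "monom_degree (lead_monom g) \<noteq> 0"
      using lead_monom_neq_0_if_not_unit[OF assms(1,2)] by (simp add: monom_degree_eq_0_iff)
    ultimately show "s \<in> {..monom_degree (lead_monom a)}"
      by (simp add: trans_le_add1)
  qed
qed simp

section \<open>Multiplicity of a prime element\<close>

lemma mult_power_times:
  fixes g a :: "'r::idom"
  assumes "g \<noteq> 0" "\<not> g dvd a"
  shows "mult g (g ^ e * a) = enat e"
proof -
  have "g ^ s dvd g ^ e * a \<longleftrightarrow> s \<le> e" for s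
  proof
    assume "g ^ s dvd g ^ e * a"
    show "s \<le> e"
    proof (rule ccontr)
      assume "\<not> s \<le> e"
      then have "g ^ Suc e dvd g ^ e * a"
        using \<open>g ^ s dvd g ^ e * a\<close> by (meson dvd_trans le_imp_power_dvd not_less_eq_eq)
      with assms show False by (simp add: power_Suc2 del: power_Suc)
    qed
  qed (simp add: le_imp_power_dvd dvd_mult2)
  moreover have "g ^ e * a \<noteq> 0" using assms by auto
  ultimately show ?thesis by (simp add: mult_def Greatest_equality)
qed

lemma common_power_factor:
  fixes y :: "'i \<Rightarrow> 'r::comm_semiring_1"
  assumes "finite {s. g ^ s dvd y j}"
  obtains s z where "\<And>i. y i = g ^ s * z i" "\<exists>i. \<not> g dvd z i"
proof -
  define T where "T = {s. \<forall>i. g ^ s dvd y i}"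
  have "finite T" using assms unfolding T_def by (rule finite_subset[rotated]) blast
  moreover have "0 \<in> T" unfolding T_def by simp
  ultimately have "Max T \<in> T" by (intro Max_in) auto
  then have "\<forall>i. \<exists>z. y i = g ^ Max T * z" unfolding T_def dvd_def by blast
  then obtain z where z: "\<And>i. y i = g ^ Max T * z i" by metis
  have "\<exists>i. \<not> g dvd z i"
  proof (rule ccontr)
    assume "\<not> (\<exists>i. \<not> g dvd z i)"
    then have "g ^ Suc (Max T) dvd y i" for i
      by (simp add: z power_Suc2 mult_dvd_mono del: power_Suc)
    then have "Suc (Max T) \<in> T" unfolding T_def by blast
    with \<open>finite T\<close> show False using Max_ge Suc_n_not_le_n by blast
  qed
  with z show thesis by (rule that)
qed

lemma power_dvd_decompose:
  fixes g a :: "'r::comm_semiring_1"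
  assumes "finite {s. g ^ s dvd a}"
  obtains e a' where "a = g ^ e * a'" "\<not> g dvd a'"
  using common_power_factor[of g "\<lambda>_. a"] assms by metis

context
  fixes g :: "'r::idom"
  assumes prime: "prime_elem g"
    and finite_power_dvd: "\<And>a. a \<noteq> 0 \<Longrightarrow> finite {s. g ^ s dvd a}"
begin

lemma mult_times: "mult g (a * b) = mult g a + mult g b"
proof (cases "a = 0 \<or> b = 0")
  case False
  then obtain e a' t b' where a: "a = g ^ e * a'" "\<not> g dvd a'" and b: "b = g ^ t * b'" "\<not> g dvd b'"
    by (meson finite_power_dvd power_dvd_decompose)
  have g: "g \<noteq> 0" using prime by (rule prime_elem_not_zeroI)
  have "a * b = g ^ (e + t) * (a' * b')" by (simp add: a b power_add ac_simps)
  moreover have "\<not> g dvd a' * b'" using a b prime by (simp add: prime_elem_dvd_mult_iff)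
  ultimately have "mult g (a * b) = enat (e + t)" using g by (simp add: mult_power_times)
  moreover have "mult g a = enat e" "mult g b = enat t" using a b g by (simp_all add: mult_power_times)
  ultimately show ?thesis by simp
qed (auto simp: mult_def)

lemma mult_power: "mult g (a ^ n) = of_nat n * mult g a"
proof (induction n)
  case 0
  have "mult g 1 = 0"
    using mult_power_times[of g 1 0] prime by (simp add: prime_elem_not_unit enat_0)
  then show ?case by simp
next
  case (Suc n)
  then show ?case by (simp add: mult_times algebra_simps)
qed

end

section \<open>The residue map to \<open>F[g]\<close>\<close>

lemma frac_quotient_hom:
  assumes "is_frac_quotient \<pi> g"
  shows "\<pi> 1 = 1" "\<pi> (a + b) = \<pi> a + \<pi> b" "\<pi> (a * b) = \<pi> a * \<pi> b"
    "\<pi> h = 0 \<longleftrightarrow> g dvd h"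
  using assms unfolding is_frac_quotient_def by blast+

lemma frac_quotient_zero:
  assumes "is_frac_quotient \<pi> g"
  shows "\<pi> 0 = 0"
proof -
  have "\<pi> 0 + \<pi> 0 = \<pi> 0" using frac_quotient_hom(2)[OF assms, of 0 0] by simp
  then show ?thesis by (metis add_cancel_right_right)
qed

lemma frac_quotient_sum:
  assumes "is_frac_quotient \<pi> g"
  shows "\<pi> (\<Sum>i\<in>A. h i) = (\<Sum>i\<in>A. \<pi> (h i))"
  by (induction A rule: infinite_finite_induct)
    (simp_all add: frac_quotient_zero[OF assms] frac_quotient_hom(2)[OF assms])

lemma frac_quotient_power:
  assumes "is_frac_quotient \<pi> g"
  shows "\<pi> (a ^ n) = \<pi> a ^ n"
  by (induction n) (simp_all add: frac_quotient_hom(1,3)[OF assms])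

lemma prime_elem_if_frac_quotient:
  assumes "is_frac_quotient \<pi> g" "g \<noteq> 0"
  shows "prime_elem g"
proof (rule prime_elemI)
  note hom = frac_quotient_hom[OF assms(1)]
  show "g \<noteq> 0" by (fact assms(2))
  show "\<not> g dvd 1" using hom(1) hom(4)[of 1] by simp
  show "g dvd a \<or> g dvd b" if "g dvd a * b" for a b
    using that hom(3,4) by (metis mult_eq_0_iff)
qed

lemma not_dvd_form_value_if_anisotropic:
  fixes \<iota> :: "'a::field \<Rightarrow> 'r::comm_ring_1" and \<pi> :: "'r \<Rightarrow> 'k::field"
    and \<phi> :: "('i::finite \<Rightarrow> 'a) \<Rightarrow> 'a"
  assumes "is_frac_quotient \<pi> g" "anisotropic (form_ext p (\<lambda>c. \<pi> (\<iota> c)) \<phi>)"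
    and "\<not> g dvd z i"
  shows "\<not> g dvd (\<Sum>j\<in>UNIV. \<iota> (\<phi> (\<lambda>k. if k = j then 1 else 0)) * z j ^ p)"
proof -
  note hom = frac_quotient_hom[OF assms(1)]
  have "\<pi> (\<Sum>j\<in>UNIV. \<iota> (\<phi> (\<lambda>k. if k = j then 1 else 0)) * z j ^ p) =
      form_ext p (\<lambda>c. \<pi> (\<iota> c)) \<phi> (\<lambda>j. \<pi> (z j))"
    unfolding form_ext_def frac_quotient_sum[OF assms(1)]
    by (simp only: hom(3) frac_quotient_power[OF assms(1)])
  also have "\<dots> \<noteq> 0"
  proof -
    have "\<pi> (z i) \<noteq> 0" using assms(3) hom(4) by simp
    moreover have "(\<exists>j. \<pi> (z j) \<noteq> 0) \<longrightarrow> form_ext p (\<lambda>c. \<pi> (\<iota> c)) \<phi> (\<lambda>j. \<pi> (z j)) \<noteq> 0"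
      using assms(2) unfolding anisotropic_def by (rule spec)
    ultimately show ?thesis by blast
  qed
  finally show ?thesis using hom(4) by blast
qed

section \<open>Values of \<open>\<phi>\<close> over \<open>F(T)\<close>\<close>

lemma Fract_power: "Fract a b ^ n = Fract (a ^ n) (b ^ n)"
  by (induction n) (simp_all add: One_fract_def)

lemma sum_Fract_same_denom:
  fixes b :: "'r::idom"
  assumes "b \<noteq> 0"
  shows "(\<Sum>i\<in>A. Fract (h i) b) = Fract (\<Sum>i\<in>A. h i) b"
proof (induction A rule: infinite_finite_induct)
  case (insert a A)
  have "Fract (h a) b + Fract (sum h A) b = Fract (b * (h a + sum h A)) (b * b)"
    using assms by (simp add: algebra_simps)
  also have "\<dots> = Fract (h a + sum h A) b" by (rule mult_fract_cancel[OF assms])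
  finally show ?case using insert by simp
qed (simp_all add: Zero_fract_def eq_fract)

lemma fract_common_denom:
  fixes x :: "'i::finite \<Rightarrow> 'r::idom fract"
  obtains D y where "D \<noteq> 0" "\<And>i. x i = Fract (y i) D"
proof -
  have "\<forall>i. \<exists>n d. d \<noteq> 0 \<and> x i = Fract n d" by (metis Fract_cases)
  then obtain n d where nd: "\<And>i. d i \<noteq> 0" "\<And>i. x i = Fract (n i) (d i)" by metis
  define y where "y i = n i * (\<Prod>j\<in>UNIV - {i}. d j)" for i
  have "x i = Fract (y i) (\<Prod>j\<in>UNIV. d j)" for i
  proof -
    have "(\<Prod>j\<in>UNIV - {i}. d j) \<noteq> 0" using nd(1) by simp
    then have "x i = Fract ((\<Prod>j\<in>UNIV - {i}. d j) * n i) ((\<Prod>j\<in>UNIV - {i}. d j) * d i)"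
      unfolding nd(2) by (rule mult_fract_cancel[symmetric])
    also have "\<dots> = Fract (y i) (\<Prod>j\<in>UNIV. d j)"
      unfolding y_def prod.remove[OF finite_UNIV UNIV_I, of d i] by (simp only: mult.commute)
    finally show ?thesis .
  qed
  moreover have "(\<Prod>j\<in>UNIV. d j) \<noteq> 0" using nd(1) by simp
  ultimately show thesis using that by blast
qed

lemma form_value_clear_denominators:
  fixes \<iota> :: "'a::field \<Rightarrow> 'r::idom" and \<phi> :: "('i::finite \<Rightarrow> 'a) \<Rightarrow> 'a"
  assumes "Fract f 1 \<in> value_set (form_ext p (\<lambda>c. Fract (\<iota> c) 1) \<phi>)"
  obtains D y where "D \<noteq> 0"
    "f * D ^ p = (\<Sum>i\<in>UNIV. \<iota> (\<phi> (\<lambda>j. if j = i then 1 else 0)) * y i ^ p)"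
proof -
  define c where "c i = \<iota> (\<phi> (\<lambda>j. if j = i then 1 else 0))" for i
  obtain x where x: "Fract f 1 = (\<Sum>i\<in>UNIV. Fract (c i) 1 * x i ^ p)"
    using assms unfolding value_set_def form_ext_def c_def by auto
  obtain D y where D: "D \<noteq> 0" and y: "\<And>i. x i = Fract (y i) D"
    using fract_common_denom[of x] by blast
  have "Fract f 1 = (\<Sum>i\<in>UNIV. Fract (c i * y i ^ p) (D ^ p))"
    by (simp add: x y Fract_power)
  also have "\<dots> = Fract (\<Sum>i\<in>UNIV. c i * y i ^ p) (D ^ p)"
    using D by (simp add: sum_Fract_same_denom)
  finally have "f * D ^ p = (\<Sum>i\<in>UNIV. c i * y i ^ p)"
    using D by (simp add: eq_fract)
  with D show thesis unfolding c_def by (rule that)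
qed

lemma mult_multiple_of_exponent:
  fixes g f D :: "'r::idom" and c y :: "'i::finite \<Rightarrow> 'r"
  assumes prime: "prime_elem g"
    and finite_power_dvd: "\<And>a. a \<noteq> 0 \<Longrightarrow> finite {s. g ^ s dvd a}"
    and "p > 0" "D \<noteq> 0"
    and form_value: "f * D ^ p = (\<Sum>i\<in>UNIV. c i * y i ^ p)"
    and anisotropy: "\<And>z. \<exists>i. \<not> g dvd z i \<Longrightarrow> \<not> g dvd (\<Sum>i\<in>UNIV. c i * z i ^ p)"
  shows "mult g f = \<infinity> \<or> (\<exists>k. mult g f = enat (p * k))"
proof (cases "f = 0")
  case False
  have "\<exists>j. y j \<noteq> 0"
  proof (rule ccontr)
    assume "\<not> (\<exists>j. y j \<noteq> 0)"
    then have "f * D ^ p = 0" using \<open>p > 0\<close> by (simp add: form_value zero_power)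
    with False \<open>D \<noteq> 0\<close> show False by simp
  qed
  then obtain j where "y j \<noteq> 0" by blast
  then obtain s z where z: "\<And>i. y i = g ^ s * z i" and "\<exists>i. \<not> g dvd z i"
    using common_power_factor[OF finite_power_dvd] by metis
  from \<open>\<exists>i. \<not> g dvd z i\<close> have not_dvd: "\<not> g dvd (\<Sum>i\<in>UNIV. c i * z i ^ p)"
    by (rule anisotropy)
  have "f * D ^ p = (\<Sum>i\<in>UNIV. g ^ (p * s) * (c i * z i ^ p))"
    by (simp add: form_value z power_mult_distrib mult_ac flip: power_mult)
  also have "\<dots> = g ^ (p * s) * (\<Sum>i\<in>UNIV. c i * z i ^ p)"
    by (simp add: sum_distrib_left)
  finally have "f * D ^ p = g ^ (p * s) * (\<Sum>i\<in>UNIV. c i * z i ^ p)" .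
  moreover have "mult g (f * D ^ p) = mult g f + of_nat p * mult g D"
    by (simp add: mult_times[OF prime finite_power_dvd] mult_power[OF prime finite_power_dvd])
  moreover have "mult g (g ^ (p * s) * (\<Sum>i\<in>UNIV. c i * z i ^ p)) = enat (p * s)"
    using prime_elem_not_zeroI[OF prime] not_dvd by (rule mult_power_times)
  ultimately have "mult g f + of_nat p * mult g D = enat (p * s)" by simp
  moreover obtain e t where "mult g f = enat e" "mult g D = enat t"
    using False \<open>D \<noteq> 0\<close> unfolding mult_def by auto
  ultimately have "e + p * t = p * s" by (simp add: of_nat_eq_enat)
  with \<open>mult g f = enat e\<close> have "mult g f = enat (p * (s - t))"
    by (simp add: diff_mult_distrib2)
  then show ?thesis by blast
qed (simp add: mult_def)

text \<open>Since \<open>form_ext\<close> is defined through the diagonal coefficients of \<open>\<phi>\<close>, the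
  hypotheses on the characteristic and on \<open>\<phi>\<close> being quasilinear are not needed; of \<open>prime p\<close>
  only \<open>p > 0\<close> is used.\<close>

theorem mainTheorem14:
  fixes p :: nat
    and \<phi> :: "('i::finite \<Rightarrow> 'a::field) \<Rightarrow> 'a"
    and g f :: "('v::{finite,linorder}, 'a) mpoly"
    and \<pi> :: "('v, 'a) mpoly \<Rightarrow> 'k::field"
  assumes "prime p" and "CHAR('a) = p"
    and "quasilinear_form p \<phi>"
    and "irreducible g"
    and "is_frac_quotient \<pi> g"
    and "Fract f 1 \<in> value_set (form_ext p (\<lambda>c. Fract (mconst c) 1) \<phi>)"
    and "anisotropic (form_ext p (\<lambda>c. \<pi> (mconst c)) \<phi>)"
  shows "mult g f = \<infinity> \<or> (\<exists>k. mult g f = enat (p * k))"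
proof -
  have "g \<noteq> 0" using \<open>irreducible g\<close> by auto
  with \<open>is_frac_quotient \<pi> g\<close> have prime: "prime_elem g" by (rule prime_elem_if_frac_quotient)
  obtain D y where D: "D \<noteq> 0"
    and f: "f * D ^ p = (\<Sum>i\<in>UNIV. mconst (\<phi> (\<lambda>j. if j = i then 1 else 0)) * y i ^ p)"
    using assms(6) by (rule form_value_clear_denominators)
  show ?thesis
  proof (rule mult_multiple_of_exponent[OF prime _ _ D f])
    show "finite {s. g ^ s dvd a}" if "a \<noteq> 0" for a
      using \<open>g \<noteq> 0\<close> prime_elem_not_unit[OF prime] that by (rule finite_power_dvd_mpoly)
    show "p > 0" using \<open>prime p\<close> by (metis gr0I not_prime_0)
    show "\<not> g dvd (\<Sum>i\<in>UNIV. mconst (\<phi> (\<lambda>j. if j = i then 1 else 0)) * z i ^ p)"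
      if "\<exists>i. \<not> g dvd z i" for z
    proof -
      from that obtain i where "\<not> g dvd z i" by blast
      then show ?thesis by (rule not_dvd_form_value_if_anisotropic[OF assms(5,7)])
    qed
  qed
qed

end
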